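(* Let $q$ be odd with $q\equiv1\pmod4$ fixed, and put $h=\left[\frac{2g-1}{2}\right]$ $(=g-1)$. Then, as $g\to\infty$, $$\sum_{\substack{P\text{ monic irreducible}\\ \deg P=2g+1}}\ \sum_{\substack{f\text{ monic},\ \deg f\le 2g-1\\ f=\square}}\frac{\chi_P(f)\,d(f)}{|f|^{1/2}}=\frac{1}{12}\,\frac{1}{\zeta_A(2)}\,\frac{|P|}{\log_q|P|}\,h(1+h)(1+2h)+O\!\left(\frac{|P|}{\log_q|P|}\,g^2\right),$$ where $|P|=q^{2g+1}$, $\log_q|P|=2g+1$, $\zeta_A(2)=\frac{1}{1-q^{-1}}$, and $[x]$ is the integer part of $x$.
   Context: $A=\mathbb{F}_q[T]$; for nonzero $f\in A$, $|f|=q^{\deg f}$. "$f=\square$" means $f$ is the square of a monic polynomial. $d(f)$ is the number of pairs $(h_1,h_2)$ of monic polynomials with $h_1h_2=f$. For a monic irreducible $Q$ and $a\in A$, $\left(\frac{a}{Q}\right)$ is $0$ if $Q\mid a$, $1$ if $a$ is a nonzero square mod $Q$, $-1$ otherwise; extended to monic $f=\prod Q_i^{e_i}$ by $\left(\frac{a}{f}\right)=\prod\left(\frac{a}{Q_i}\right)^{e_i}$, $\left(\frac{a}{1}\right)=1$. For monic irreducible $P$, $\chi_P(f)=\left(\frac{P}{f}\right)$. Implied constants may depend on $q$. *)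

theory Defs
  imports "HOL-Computational_Algebra.Computational_Algebra" "HOL-Library.Landau_Symbols" "HOL-Library.Cardinality"
begin

definition monic :: "'a::field_gcd poly \<Rightarrow> bool" where
  "monic f \<longleftrightarrow> f \<noteq> 0 \<and> lead_coeff f = 1"

definition poly_legendre :: "'a::field_gcd poly \<Rightarrow> 'a poly \<Rightarrow> int" where
  "poly_legendre a Q =
     (if Q dvd a then 0
      else if (\<exists>b. b\<^sup>2 mod Q = a mod Q) then 1 else -1)"

definition poly_jacobi :: "'a::field_gcd poly \<Rightarrow> 'a poly \<Rightarrow> int" where
  "poly_jacobi a f = (\<Prod>Q\<in>prime_factors f. poly_legendre a Q ^ multiplicity Q f)"

definition chi :: "'a::field_gcd poly \<Rightarrow> 'a poly \<Rightarrow> int" where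
  "chi P f = poly_jacobi P f"

definition divisor_count :: "'a::field_gcd poly \<Rightarrow> nat" where
  "divisor_count f = card {(h1, h2). monic h1 \<and> monic h2 \<and> h1 * h2 = f}"

definition pnorm :: "'a::{finite,field_gcd} poly \<Rightarrow> real" where
  "pnorm f = real (CARD('a)) ^ degree f"

definition is_monic_square :: "'a::field_gcd poly \<Rightarrow> bool" where
  "is_monic_square f \<longleftrightarrow> (\<exists>h. monic h \<and> f = h\<^sup>2)"

end

theory Submission
  imports Defs "HOL-Real_Asymp.Real_Asymp"
begin

text \<open>
  For \<open>deg h < g\<close> every prime factor \<open>Q\<close> of \<open>h\<^sup>2\<close> has degree below \<open>deg P = 2g + 1\<close>, so
  \<open>\<chi>\<^sub>P(h\<^sup>2) = \<Prod> (P/Q)\<^sup>2\<^sup>e = 1\<close> and the double sum is \<open>\<pi>(2g + 1)\<close> times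
  \<open>\<Sum>\<^bsub>deg h < g\<^esub> d(h\<^sup>2)/|h|\<close>. Writing a factorisation \<open>h\<^sub>1 h\<^sub>2 = h\<^sup>2\<close> as
  \<open>(e s\<^sup>2, e t\<^sup>2)\<close> with \<open>s, t\<close> coprime, \<open>\<Sum>\<^bsub>deg h = m\<^esub> d(h\<^sup>2)\<close> counts coprime triples;
  counting coprime pairs through their gcd gives the exact value
  \<open>q\<^sup>m ((m + 1)(m + 2)/2 - m(m - 1)/(2q))\<close>, and summing over \<open>m < g\<close> yields a cubic in \<open>g\<close>
  that agrees with \<open>(1 - 1/q) h(h + 1)(2h + 1)/12\<close> up to \<open>O(g\<^sup>2)\<close>. Finally, the identity
  \<open>\<Sum>\<^bsub>d | n\<^esub> d \<pi>(d) = q\<^sup>n\<close> gives \<open>\<pi>(n) = q\<^sup>n/n + O(n\<^sup>2 q\<^sup>n\<^sup>/\<^sup>2)\<close>, and this error,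
  multiplied by the cubic, is eventually below \<open>|P| g\<^sup>2 / log\<^sub>q |P|\<close>.
\<close>

lemma monic_nonzero: "monic f \<Longrightarrow> f \<noteq> 0"
  by (simp add: monic_def)

lemma monic_1 [simp]: "monic (1 :: 'a::field_gcd poly)"
  by (simp add: monic_def)

lemma monic_mult: "monic f \<Longrightarrow> monic g \<Longrightarrow> monic (f * g :: 'a::field_gcd poly)"
  by (simp add: monic_def lead_coeff_mult)

lemma monic_power: "monic f \<Longrightarrow> monic (f ^ k :: 'a::field_gcd poly)"
  by (induction k) (auto intro: monic_mult)

lemma monic_cancel_left: "monic f \<Longrightarrow> monic (f * g) \<Longrightarrow> monic (g :: 'a::field_gcd poly)"
  by (auto simp: monic_def lead_coeff_mult)

lemma degree_mult_monic:
  "monic f \<Longrightarrow> monic g \<Longrightarrow> degree (f * g :: 'a::field_gcd poly) = degree f + degree g"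
  by (simp add: monic_def degree_mult_eq)

lemma degree_power_monic: "monic f \<Longrightarrow> degree (f ^ k :: 'a::field_gcd poly) = k * degree f"
  by (simp add: degree_power_eq monic_nonzero)

lemma normalize_monic: "monic f \<Longrightarrow> normalize (f :: 'a::field_gcd poly) = f"
  by (simp add: monic_def normalize_poly_eq_map_poly)

lemma monic_iff_normalize_eq: "monic f \<longleftrightarrow> f \<noteq> 0 \<and> normalize (f :: 'a::field_gcd poly) = f"
proof
  assume "f \<noteq> 0 \<and> normalize f = f"
  then have "lead_coeff f = lead_coeff f div unit_factor (lead_coeff f)" "f \<noteq> 0"
    using coeff_normalize[of f "degree f"] by simp_all
  then show "monic f"
    by (simp add: monic_def dvd_field_iff is_unit_normalize)
qed (simp add: monic_nonzero normalize_monic)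

lemma monic_gcd: "a \<noteq> 0 \<Longrightarrow> monic (gcd a (b :: 'a::field_gcd poly))"
  by (simp add: monic_iff_normalize_eq)

lemma prime_iff_monic_irreducible: "prime P \<longleftrightarrow> monic P \<and> irreducible (P :: 'a::field_gcd poly)"
  by (auto simp: prime_def prime_elem_iff_irreducible monic_iff_normalize_eq)

lemma irreducible_degree_pos: "irreducible (P :: 'a::field_gcd poly) \<Longrightarrow> degree P \<ge> 1"
  using is_unit_iff_degree[of P] by (cases "degree P") (auto simp: irreducible_def)

lemma monic_square_eq_iff:
  fixes s t :: "'a::field_gcd poly"
  assumes "monic s" "monic t"
  shows "s\<^sup>2 = t\<^sup>2 \<longleftrightarrow> s = t"
proof
  assume "s\<^sup>2 = t\<^sup>2"
  then have "s ^ 2 dvd t ^ 2 \<and> t ^ 2 dvd s ^ 2"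
    by simp
  then have "normalize s = normalize t"
    unfolding associated_iff_dvd pow_divides_pow_iff[OF zero_less_numeral] .
  with assms show "s = t"
    by (simp add: normalize_monic)
qed simp

lemma gcd_mult_monic_coprime:
  "monic d \<Longrightarrow> coprime s t \<Longrightarrow> gcd (d * s) (d * t) = (d :: 'a::field_gcd poly)"
  using gcd_mult_left[of d s t] by (simp add: normalize_monic)

lemma monic_gcd_decomposition:
  fixes u v :: "'a::field_gcd poly"
  assumes "monic u" "monic v"
  obtains s t where "u = gcd u v * s" "v = gcd u v * t" "monic s" "monic t" "coprime s t"
proof -
  define d where "d = gcd u v"
  have d: "monic d" "d \<noteq> 0"
    using assms by (simp_all add: d_def monic_gcd monic_nonzero)
  obtain s t where st: "u = d * s" "v = d * t"
    unfolding d_def by (meson dvdE gcd_dvd1 gcd_dvd2)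
  have monic: "monic s" "monic t"
    using monic_cancel_left[OF d(1)] assms st by simp_all
  have "gcd u v = normalize (d * gcd s t)"
    by (simp only: st gcd_mult_left)
  also have "\<dots> = d * gcd s t"
    using d(1) by (simp add: normalize_mult normalize_monic)
  finally have "gcd s t = 1"
    using d(2) unfolding d_def[symmetric] by (metis mult_cancel_left1)
  then have "coprime s t"
    by (simp add: coprime_iff_gcd_eq_1)
  with st monic show ?thesis
    unfolding d_def by (rule that)
qed

definition monics :: "nat \<Rightarrow> 'a::field_gcd poly set" where
  "monics n = {f. monic f \<and> degree f = n}"

lemma monics_eq_image_lists:
  "monics n = (\<lambda>xs. Poly (xs @ [1])) ` {xs :: 'a::field_gcd list. length xs = n}"
proof (intro set_eqI iffI)
  fix f :: "'a poly"
  assume "f \<in> monics n"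
  then have f: "monic f" "degree f = n" "f \<noteq> 0"
    by (auto simp: monics_def monic_nonzero)
  then have "coeffs f = butlast (coeffs f) @ [1]"
    by (metis append_butlast_last_id coeffs_eq_Nil last_coeffs_eq_coeff_degree monic_def)
  then have "f = Poly (butlast (coeffs f) @ [1])"
    by (metis Poly_coeffs)
  moreover have "length (butlast (coeffs f)) = n"
    using f by (simp add: length_coeffs_degree)
  ultimately show "f \<in> (\<lambda>xs. Poly (xs @ [1])) ` {xs. length xs = n}"
    by blast
next
  fix f :: "'a poly"
  assume "f \<in> (\<lambda>xs. Poly (xs @ [1])) ` {xs. length xs = n}"
  then obtain xs where xs: "length xs = n" "f = Poly (xs @ [1])"
    by auto
  then have coeffs: "coeffs f = xs @ [1]"
    by (simp add: coeffs_Poly strip_while_snoc)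
  then have "f \<noteq> 0"
    by auto
  moreover have "degree f = n"
    using coeffs xs \<open>f \<noteq> 0\<close>
    by (metis length_coeffs_degree length_append_singleton add_Suc_right add_0_right nat.inject)
  moreover have "lead_coeff f = 1"
    using coeffs \<open>f \<noteq> 0\<close> by (metis last_coeffs_eq_coeff_degree last_snoc)
  ultimately show "f \<in> monics n"
    by (simp add: monics_def monic_def)
qed

lemma card_monics: "card (monics n :: 'a::{finite,field_gcd} poly set) = CARD('a) ^ n"
proof -
  have "inj_on (\<lambda>xs. Poly (xs @ [1 :: 'a])) {xs. length xs = n}"
  proof (rule inj_onI)
    fix xs ys :: "'a list"
    assume "Poly (xs @ [1]) = Poly (ys @ [1])"
    then have "coeffs (Poly (xs @ [1])) = coeffs (Poly (ys @ [1]))"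
      by simp
    then show "xs = ys"
      by (simp add: coeffs_Poly strip_while_snoc)
  qed
  then show ?thesis
    unfolding monics_eq_image_lists
    by (subst card_image) (use card_lists_length_eq[of "UNIV :: 'a set" n] in simp_all)
qed

lemma finite_monics [simp]: "finite (monics n :: 'a::{finite,field_gcd} poly set)"
  unfolding monics_eq_image_lists using finite_lists_length_eq[of "UNIV :: 'a set" n] by simp

lemma finite_monics_degree_le:
  "finite {f :: 'a::{finite,field_gcd} poly. monic f \<and> degree f \<le> n}"
proof -
  have "{f :: 'a poly. monic f \<and> degree f \<le> n} = (\<Union>k\<le>n. monics k)"
    by (auto simp: monics_def)
  then show ?thesis
    by simp
qed

section \<open>Divisor counts of squares\<close>

definition monic_factorizations :: "'a::field_gcd poly \<Rightarrow> ('a poly \<times> 'a poly) set" where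
  "monic_factorizations f = {(h1, h2). monic h1 \<and> monic h2 \<and> h1 * h2 = f}"

lemma finite_monic_factorizations:
  fixes f :: "'a::{finite,field_gcd} poly"
  assumes "f \<noteq> 0"
  shows "finite (monic_factorizations f)"
proof (rule finite_subset)
  let ?D = "{h :: 'a poly. monic h \<and> degree h \<le> degree f}"
  show "monic_factorizations f \<subseteq> ?D \<times> ?D"
    by (auto simp: monic_factorizations_def degree_mult_monic)
  show "finite (?D \<times> ?D)"
    using finite_monics_degree_le by blast
qed

definition coprime_triples :: "nat \<Rightarrow> ('a::field_gcd poly \<times> 'a poly \<times> 'a poly) set" where
  "coprime_triples m =
     {(e, s, t). monic e \<and> monic s \<and> monic t \<and> coprime s t \<and> degree e + degree s + degree t = m}"

lemma coprime_factor_of_square: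
  fixes u v w :: "'a::field_gcd poly"
  assumes "monic u" "coprime u v" "u * v = w\<^sup>2"
  shows "(gcd u w)\<^sup>2 = u"
proof -
  have "(gcd u w)\<^sup>2 = gcd (u\<^sup>2) (w\<^sup>2)"
    by simp
  also have "\<dots> = gcd (u * u) (u * v)"
    using assms(3) by (simp add: power2_eq_square)
  also have "\<dots> = u"
    using assms(1,2) by (simp add: gcd_mult_left normalize_monic)
  finally show ?thesis .
qed

text \<open>With \<open>e = gcd h1 h2\<close> the cofactors of \<open>e\<close> are coprime with square product, so both are
  squares.\<close>

lemma factorization_of_squareE:
  fixes h h1 h2 :: "'a::field_gcd poly"
  assumes "monic h" "monic h1" "monic h2" "h1 * h2 = h\<^sup>2"
  obtains e s t where "h = e * s * t" "h1 = e * s\<^sup>2" "h2 = e * t\<^sup>2"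
    "monic e" "monic s" "monic t" "coprime s t"
proof -
  obtain u v where uv: "h1 = gcd h1 h2 * u" "h2 = gcd h1 h2 * v" "monic u" "monic v" "coprime u v"
    using monic_gcd_decomposition[OF assms(2,3)] by blast
  define e where "e = gcd h1 h2"
  have e: "monic e" "e \<noteq> 0"
    using assms(2) by (simp_all add: e_def monic_gcd monic_nonzero)
  have "e\<^sup>2 dvd h\<^sup>2"
    using assms(4) by (metis e_def gcd_dvd1 gcd_dvd2 mult_dvd_mono power2_eq_square)
  then obtain w where w: "h = e * w"
    by (auto elim: dvdE)
  have "monic w"
    using assms(1) e(1) w monic_cancel_left by blast
  have "e\<^sup>2 * (u * v) = e\<^sup>2 * w\<^sup>2"
    using assms(4) uv(1,2) w unfolding e_def[symmetric] by (simp add: power2_eq_square algebra_simps)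
  then have uvw: "u * v = w\<^sup>2"
    using e(2) by simp
  define s t where "s = gcd u w" and "t = gcd v w"
  have s: "s\<^sup>2 = u" "monic s"
    using coprime_factor_of_square[OF uv(3,5) uvw] uv(3) by (simp_all add: s_def monic_gcd monic_nonzero)
  have t: "t\<^sup>2 = v" "monic t"
    using coprime_factor_of_square[OF uv(4), of u w] uv(4,5) uvw
    by (simp_all add: t_def monic_gcd monic_nonzero coprime_commute mult.commute)
  have "(s * t)\<^sup>2 = w\<^sup>2"
    using s t uvw by (simp add: power_mult_distrib)
  then have "s * t = w"
    using monic_square_eq_iff monic_mult s(2) t(2) \<open>monic w\<close> by blast
  moreover have "coprime s t"
    using uv(5) coprime_divisors[of s u t v] by (simp add: s_def t_def)
  ultimately show ?thesis
    using that[of e s t] w uv(1,2) s t e(1) unfolding e_def[symmetric] by (simp add: mult.assoc)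
qed

lemma bij_betw_coprime_triples_square_factorizations:
  "bij_betw (\<lambda>(e, s, t). (e * s * t, e * s\<^sup>2, e * t\<^sup>2))
     (coprime_triples m :: ('a::field_gcd poly \<times> _ \<times> _) set)
     (SIGMA h:monics m. monic_factorizations (h\<^sup>2))"
  (is "bij_betw ?f ?A ?B")
proof (rule bij_betw_imageI)
  show "inj_on ?f ?A"
  proof (rule inj_onI)
    fix x y :: "'a poly \<times> 'a poly \<times> 'a poly"
    assume "x \<in> coprime_triples m" "y \<in> coprime_triples m"
      and images: "(case x of (e, s, t) \<Rightarrow> (e * s * t, e * s\<^sup>2, e * t\<^sup>2))
        = (case y of (e, s, t) \<Rightarrow> (e * s * t, e * s\<^sup>2, e * t\<^sup>2))"
    then obtain e s t e' s' t' where xy: "x = (e, s, t)" "y = (e', s', t')"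
      and monic: "monic e" "monic s" "monic t" "monic e'" "monic s'" "monic t'"
      and coprime: "coprime (s\<^sup>2) (t\<^sup>2)" "coprime (s'\<^sup>2) (t'\<^sup>2)"
      by (auto simp: coprime_triples_def)
    from images have eq: "e * s\<^sup>2 = e' * s'\<^sup>2" "e * t\<^sup>2 = e' * t'\<^sup>2"
      by (simp_all add: xy)
    have "e = e'"
      using gcd_mult_monic_coprime[OF monic(1) coprime(1)] gcd_mult_monic_coprime[OF monic(4) coprime(2)]
        eq by simp
    with eq monic_nonzero[OF monic(1)] have "s\<^sup>2 = s'\<^sup>2" "t\<^sup>2 = t'\<^sup>2"
      by simp_all
    with \<open>e = e'\<close> monic show "x = y"
      by (simp add: xy monic_square_eq_iff)
  qed
  show "?f ` ?A = ?B"
  proof (intro set_eqI iffI)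
    fix x :: "'a poly \<times> 'a poly \<times> 'a poly"
    assume "x \<in> ?f ` ?A"
    then obtain e s t where x: "x = (e * s * t, e * s\<^sup>2, e * t\<^sup>2)"
      and monic: "monic e" "monic s" "monic t" and deg: "degree e + degree s + degree t = m"
      by (auto simp: coprime_triples_def)
    have "(e * s\<^sup>2) * (e * t\<^sup>2) = (e * s * t)\<^sup>2"
      by (simp add: power2_eq_square algebra_simps)
    moreover have "monic (e * s * t)" "monic (e * s\<^sup>2)" "monic (e * t\<^sup>2)"
      using monic by (simp_all add: monic_mult monic_power)
    moreover have "degree (e * s * t) = m"
      using monic deg by (simp add: degree_mult_monic monic_mult)
    ultimately show "x \<in> ?B"
      by (simp add: x monics_def monic_factorizations_def)
  next
    fix x :: "'a poly \<times> 'a poly \<times> 'a poly"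
    assume "x \<in> ?B"
    then obtain h h1 h2 where x: "x = (h, h1, h2)" and h: "monic h" "degree h = m"
      and factors: "monic h1" "monic h2" "h1 * h2 = h\<^sup>2"
      by (auto simp: monics_def monic_factorizations_def)
    obtain e s t where est: "h = e * s * t" "h1 = e * s\<^sup>2" "h2 = e * t\<^sup>2"
      and monic: "monic e" "monic s" "monic t" and "coprime s t"
      using factorization_of_squareE[OF h(1) factors] .
    then have "(e, s, t) \<in> coprime_triples m"
      using h(2) by (simp add: coprime_triples_def degree_mult_monic monic_mult)
    then show "x \<in> ?f ` ?A"
      unfolding x est by force
  qed
qed

lemma sum_divisor_count_squares:
  "(\<Sum>h\<in>monics m. divisor_count (h\<^sup>2 :: 'a::{finite,field_gcd} poly))
     = card (coprime_triples m :: ('a poly \<times> _ \<times> _) set)"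
proof -
  have "(\<Sum>h\<in>monics m. divisor_count (h\<^sup>2 :: 'a poly))
      = (\<Sum>h\<in>monics m. card (monic_factorizations (h\<^sup>2 :: 'a poly)))"
    by (simp add: divisor_count_def monic_factorizations_def)
  also have "\<dots> = card (SIGMA h:monics m. monic_factorizations (h\<^sup>2 :: 'a poly))"
    by (rule card_SigmaI[symmetric]) (simp, simp add: finite_monic_factorizations monics_def monic_nonzero)
  also have "\<dots> = card (coprime_triples m :: ('a poly \<times> _ \<times> _) set)"
    by (rule bij_betw_same_card[OF bij_betw_coprime_triples_square_factorizations, symmetric])
  finally show ?thesis .
qed

definition coprime_pairs :: "nat \<Rightarrow> nat \<Rightarrow> ('a::field_gcd poly \<times> 'a poly) set" where
  "coprime_pairs b c = {(s, t). s \<in> monics b \<and> t \<in> monics c \<and> coprime s t}"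

lemma finite_coprime_pairs [simp]: "finite (coprime_pairs b c :: ('a::{finite,field_gcd} poly \<times> _) set)"
  by (rule finite_subset[of _ "monics b \<times> monics c"]) (auto simp: coprime_pairs_def)

lemma bij_betw_gcd_cofactors:
  "bij_betw (\<lambda>(d, s, t). (d * s, d * t))
     (\<Union>k\<le>min b c. monics k \<times> coprime_pairs (b - k) (c - k) :: ('a::field_gcd poly \<times> 'a poly \<times> 'a poly) set)
     (monics b \<times> monics c)"
  (is "bij_betw ?f ?A ?B")
proof (rule bij_betw_imageI)
  show "inj_on ?f ?A"
  proof (rule inj_onI)
    fix x y :: "'a poly \<times> 'a poly \<times> 'a poly"
    assume "x \<in> ?A" "y \<in> ?A" and images: "?f x = ?f y"
    then obtain d s t d' s' t' where xy: "x = (d, s, t)" "y = (d', s', t')"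
      and monic: "monic d" "monic d'" and coprime: "coprime s t" "coprime s' t'"
      by (auto simp: monics_def coprime_pairs_def)
    from images have eq: "d * s = d' * s'" "d * t = d' * t'"
      by (simp_all add: xy)
    have "d = d'"
      using gcd_mult_monic_coprime[OF monic(1) coprime(1)] gcd_mult_monic_coprime[OF monic(2) coprime(2)]
        eq by simp
    with eq monic_nonzero[OF monic(1)] show "x = y"
      by (simp add: xy)
  qed
  show "?f ` ?A = ?B"
  proof (intro set_eqI iffI)
    fix x :: "'a poly \<times> 'a poly"
    assume "x \<in> ?f ` ?A"
    then show "x \<in> ?B"
      by (auto simp: monics_def coprime_pairs_def monic_mult degree_mult_monic)
  next
    fix x :: "'a poly \<times> 'a poly"
    assume "x \<in> ?B"
    then obtain u v where x: "x = (u, v)" and u: "monic u" "degree u = b" and v: "monic v" "degree v = c"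
      by (auto simp: monics_def)
    obtain s t where st: "u = gcd u v * s" "v = gcd u v * t" "monic s" "monic t" "coprime s t"
      using monic_gcd_decomposition[OF u(1) v(1)] .
    have d: "monic (gcd u v)"
      using u(1) by (simp add: monic_gcd monic_nonzero)
    have "degree u = degree (gcd u v) + degree s" "degree v = degree (gcd u v) + degree t"
      using degree_mult_monic[OF d st(3)] degree_mult_monic[OF d st(4)] st(1,2) by simp_all
    with u v d st have "(gcd u v, s, t) \<in> ?A"
      by (auto simp: monics_def coprime_pairs_def intro!: bexI[of _ "degree (gcd u v)"])
    then show "x \<in> ?f ` ?A"
      using st(1,2) unfolding x by force
  qed
qed

lemma sum_card_coprime_pairs:
  "(\<Sum>k\<le>min b c. CARD('a) ^ k * card (coprime_pairs (b - k) (c - k) :: ('a::{finite,field_gcd} poly \<times> _) set))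
     = CARD('a) ^ (b + c)"
proof -
  have disjoint: "\<forall>i\<in>{..min b c}. \<forall>j\<in>{..min b c}. i \<noteq> j \<longrightarrow>
      (monics i \<times> coprime_pairs (b - i) (c - i)) \<inter> (monics j \<times> coprime_pairs (b - j) (c - j))
        = ({} :: ('a poly \<times> 'a poly \<times> 'a poly) set)"
    by (auto simp: monics_def)
  have "(\<Sum>k\<le>min b c. CARD('a) ^ k * card (coprime_pairs (b - k) (c - k) :: ('a poly \<times> 'a poly) set))
      = card (\<Union>k\<le>min b c. monics k \<times> coprime_pairs (b - k) (c - k) :: ('a poly \<times> 'a poly \<times> 'a poly) set)"
    by (subst card_UN_disjoint[OF _ _ disjoint]) (simp_all add: card_cartesian_product card_monics)
  also have "\<dots> = card (monics b \<times> monics c :: ('a poly \<times> 'a poly) set)"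
    by (rule bij_betw_same_card[OF bij_betw_gcd_cofactors])
  finally show ?thesis
    by (simp add: card_cartesian_product card_monics power_add)
qed

text \<open>Comparing the identity above for \<open>(b, c)\<close> and \<open>(b - 1, c - 1)\<close>: the terms with
  \<open>k \<ge> 1\<close> of the former are \<open>q\<close> times the latter.\<close>

lemma card_coprime_pairs:
  "card (coprime_pairs b c :: ('a::{finite,field_gcd} poly \<times> _) set)
     + (if 0 < b \<and> 0 < c then CARD('a) ^ (b + c - 1) else 0) = CARD('a) ^ (b + c)"
proof (cases "0 < b \<and> 0 < c")
  case False
  then show ?thesis
    using sum_card_coprime_pairs[of b c, where 'a = 'a] by auto
next
  case True
  let ?q = "CARD('a)" and ?cp = "\<lambda>b c. card (coprime_pairs b c :: ('a poly \<times> 'a poly) set)"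
  have min: "min b c = Suc (min (b - 1) (c - 1))" and exp: "b + c - 1 = Suc (b - 1 + (c - 1))"
    using True by auto
  have "?cp b c + ?q * (\<Sum>k\<le>min (b - 1) (c - 1). ?q ^ k * ?cp (b - 1 - k) (c - 1 - k))
      = (\<Sum>k\<le>min b c. ?q ^ k * ?cp (b - k) (c - k))"
    unfolding min sum.atMost_Suc_shift by (simp add: sum_distrib_left mult.assoc)
  then show ?thesis
    using True sum_card_coprime_pairs[of b c, where 'a = 'a]
      sum_card_coprime_pairs[of "b - 1" "c - 1", where 'a = 'a]
    by (simp only: exp power_Suc) simp
qed

lemma double_sum_triangle: "2 * (\<Sum>b\<le>m. \<Sum>c\<le>m - b. 1 :: nat) = (m + 1) * (m + 2)"
proof (induction m)
  case (Suc m)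
  then show ?case
    unfolding sum.atMost_Suc_shift by simp
qed simp

lemma double_sum_triangle_interior:
  "2 * (\<Sum>b\<le>m. \<Sum>c\<le>m - b. if 0 < b \<and> 0 < c then 1 else 0 :: nat) = m * (m - 1)"
proof (cases m)
  case (Suc n)
  have "(\<Sum>c\<le>k. if 0 < c then 1 else 0 :: nat) = k" for k
    by (induction k) simp_all
  then have "(\<Sum>b\<le>m. \<Sum>c\<le>m - b. if 0 < b \<and> 0 < c then 1 else 0 :: nat) = (\<Sum>b\<le>n. n - b)"
    unfolding Suc sum.atMost_Suc_shift by simp
  moreover have "2 * (\<Sum>b\<le>k. k - b) = k * (k + 1)" for k :: nat
  proof (induction k)
    case (Suc k)
    then show ?case
      unfolding sum.atMost_Suc_shift by simp
  qed simp
  ultimately show ?thesis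
    by (simp add: Suc)
qed simp

lemma coprime_triples_eq_UN:
  "coprime_triples m = (\<Union>b\<le>m. \<Union>c\<le>m - b. monics (m - b - c) \<times> coprime_pairs b c)"
  by (auto simp: coprime_triples_def monics_def coprime_pairs_def)

lemma card_coprime_triples_eq_sum:
  "card (coprime_triples m :: ('a::{finite,field_gcd} poly \<times> 'a poly \<times> 'a poly) set)
     = (\<Sum>b\<le>m. \<Sum>c\<le>m - b. CARD('a) ^ (m - b - c) * card (coprime_pairs b c :: ('a poly \<times> 'a poly) set))"
proof -
  have disjoint_c: "\<forall>i\<in>{..m - b}. \<forall>j\<in>{..m - b}. i \<noteq> j \<longrightarrow>
      (monics (m - b - i) \<times> coprime_pairs b i) \<inter> (monics (m - b - j) \<times> coprime_pairs b j)
        = ({} :: ('a poly \<times> 'a poly \<times> 'a poly) set)" for b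
    by (auto simp: coprime_pairs_def monics_def)
  have disjoint_b: "\<forall>i\<in>{..m}. \<forall>j\<in>{..m}. i \<noteq> j \<longrightarrow>
      (\<Union>c\<le>m - i. monics (m - i - c) \<times> coprime_pairs i c)
        \<inter> (\<Union>c\<le>m - j. monics (m - j - c) \<times> coprime_pairs j c)
        = ({} :: ('a poly \<times> 'a poly \<times> 'a poly) set)"
    by (auto simp: coprime_pairs_def monics_def)
  have "card (\<Union>c\<le>m - b. monics (m - b - c) \<times> coprime_pairs b c :: ('a poly \<times> 'a poly \<times> 'a poly) set)
      = (\<Sum>c\<le>m - b. CARD('a) ^ (m - b - c) * card (coprime_pairs b c :: ('a poly \<times> 'a poly) set))" for b
    by (subst card_UN_disjoint[OF _ _ disjoint_c]) (simp_all add: card_cartesian_product card_monics)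
  then show ?thesis
    unfolding coprime_triples_eq_UN by (subst card_UN_disjoint[OF _ _ disjoint_b]) simp_all
qed

lemma card_coprime_triples:
  "2 * card (coprime_triples m :: ('a::{finite,field_gcd} poly \<times> 'a poly \<times> 'a poly) set)
     + m * (m - 1) * CARD('a) ^ (m - 1)
   = (m + 1) * (m + 2) * CARD('a) ^ m"
proof -
  let ?q = "CARD('a)"
  let ?term = "\<lambda>b c. ?q ^ (m - b - c) * card (coprime_pairs b c :: ('a poly \<times> 'a poly) set)"
  let ?interior = "\<lambda>b c. if 0 < b \<and> 0 < c then 1 else 0 :: nat"
  have "?term b c + ?interior b c * ?q ^ (m - 1) = ?q ^ m" if "b + c \<le> m" for b c
  proof -
    have "?q ^ m = ?q ^ (m - b - c) * ?q ^ (b + c)"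
      using that by (simp flip: power_add)
    moreover have "?q ^ (m - 1) = ?q ^ (m - b - c) * ?q ^ (b + c - 1)" if "0 < b" "0 < c"
      using that \<open>b + c \<le> m\<close> by (simp flip: power_add)
    ultimately show ?thesis
      using card_coprime_pairs[of b c, where 'a = 'a] by (auto simp flip: add_mult_distrib2)
  qed
  then have "(\<Sum>b\<le>m. \<Sum>c\<le>m - b. ?term b c) + (\<Sum>b\<le>m. \<Sum>c\<le>m - b. ?interior b c) * ?q ^ (m - 1)
      = (\<Sum>b\<le>m. \<Sum>c\<le>m - b. 1) * ?q ^ m"
    by (simp add: sum_distrib_right flip: sum.distrib)
  then have "2 * (\<Sum>b\<le>m. \<Sum>c\<le>m - b. ?term b c) + m * (m - 1) * ?q ^ (m - 1) = (m + 1) * (m + 2) * ?q ^ m"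
    using double_sum_triangle[of m] double_sum_triangle_interior[of m]
    by (metis (no_types, lifting) add_mult_distrib2 mult.assoc)
  then show ?thesis
    by (simp only: card_coprime_triples_eq_sum)
qed

lemma monic_squares_degree_le:
  assumes "g \<ge> 1"
  shows "{f :: 'a::field_gcd poly. monic f \<and> degree f \<le> 2 * g - 1 \<and> is_monic_square f}
    = (\<lambda>h. h\<^sup>2) ` (\<Union>m<g. monics m)"
proof -
  have "degree (h\<^sup>2) \<le> 2 * g - 1 \<longleftrightarrow> degree h < g" if "monic h" for h :: "'a poly"
    using that assms by (simp add: degree_power_monic) arith
  then show ?thesis
    by (auto simp: is_monic_square_def monics_def monic_power)
qed

lemma sum_divisor_count_squares_weighted:
  "(\<Sum>h\<in>monics m. real (divisor_count (h\<^sup>2 :: 'a::{finite,field_gcd} poly)) / real CARD('a) ^ m)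
     = (real m + 1) * (real m + 2) / 2 - real m * (real m - 1) / (2 * real CARD('a))"
proof -
  let ?q = "real CARD('a)"
  let ?C = "real (card (coprime_triples m :: ('a poly \<times> 'a poly \<times> 'a poly) set))"
  have q: "?q > 0"
    by simp
  have sum: "(\<Sum>h\<in>monics m. real (divisor_count (h\<^sup>2 :: 'a poly)) / ?q ^ m) = ?C / ?q ^ m"
    by (simp add: sum_divisor_count_squares flip: sum_divide_distrib of_nat_sum)
  have "2 * ?C + real m * (real m - 1) * ?q ^ (m - 1) = (real m + 1) * (real m + 2) * ?q ^ m"
    using arg_cong[OF card_coprime_triples[of m, where 'a = 'a], of real] by (cases m) (simp_all add: algebra_simps)
  then have "2 * ?C = (real m + 1) * (real m + 2) * ?q ^ m - real m * (real m - 1) * ?q ^ (m - 1)"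
    by (simp add: eq_diff_eq)
  also have "real m * (real m - 1) * ?q ^ (m - 1) = real m * (real m - 1) * ?q ^ m / ?q"
    using q by (cases m) simp_all
  finally have "?C = ((real m + 1) * (real m + 2) * ?q ^ m - real m * (real m - 1) * ?q ^ m / ?q) / 2"
    by simp
  then show ?thesis
    unfolding sum using q by (simp add: field_simps)
qed

lemma sum_cubic_closed_form:
  fixes q :: real
  assumes "q \<noteq> 0"
  shows "(\<Sum>m<g. (real m + 1) * (real m + 2) / 2 - real m * (real m - 1) / (2 * q))
    = real g * (real g + 1) * (real g + 2) / 6 - real g * (real g - 1) * (real g - 2) / (6 * q)"
proof (induction g)
  case (Suc g)
  show ?case
    unfolding sum.lessThan_Suc Suc.IH using assms by (simp add: field_simps)
qed simp

lemma sum_divisor_count_monic_squares: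
  assumes "g \<ge> 1"
  shows "(\<Sum>f\<in>{f :: 'a::{finite,field_gcd} poly. monic f \<and> degree f \<le> 2 * g - 1 \<and> is_monic_square f}.
            real (divisor_count f) / sqrt (pnorm f))
    = real g * (real g + 1) * (real g + 2) / 6 - real g * (real g - 1) * (real g - 2) / (6 * real CARD('a))"
proof -
  let ?q = "real CARD('a)"
  have "inj_on (\<lambda>h. h\<^sup>2) (\<Union>m<g. monics m :: 'a poly set)"
    by (rule inj_onI) (auto simp: monics_def monic_square_eq_iff)
  then have "(\<Sum>f\<in>{f :: 'a poly. monic f \<and> degree f \<le> 2 * g - 1 \<and> is_monic_square f}.
            real (divisor_count f) / sqrt (pnorm f))
      = (\<Sum>h\<in>(\<Union>m<g. monics m). real (divisor_count (h\<^sup>2 :: 'a poly)) / sqrt (pnorm (h\<^sup>2)))"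
    unfolding monic_squares_degree_le[OF assms] by (simp add: sum.reindex)
  also have "\<dots> = (\<Sum>m<g. \<Sum>h\<in>monics m. real (divisor_count (h\<^sup>2 :: 'a poly)) / sqrt (pnorm (h\<^sup>2)))"
    by (rule sum.UNION_disjoint) (simp, simp, auto simp: monics_def)
  also have "\<dots> = (\<Sum>m<g. \<Sum>h\<in>monics m. real (divisor_count (h\<^sup>2 :: 'a poly)) / ?q ^ m)"
    by (intro sum.cong refl)
      (simp add: monics_def pnorm_def degree_power_monic power_mult real_sqrt_power flip: power_mult_distrib)
  also have "\<dots> = real g * (real g + 1) * (real g + 2) / 6 - real g * (real g - 1) * (real g - 2) / (6 * ?q)"
    by (simp add: sum_divisor_count_squares_weighted sum_cubic_closed_form)
  finally show ?thesis .
qed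

section \<open>The character on squares\<close>

lemma degree_eq_if_dvd_irreducible:
  fixes P Q :: "'a::field_gcd poly"
  assumes "irreducible P" "Q dvd P" "\<not> is_unit Q"
  shows "degree Q = degree P"
proof -
  obtain r where r: "P = Q * r"
    using assms(2) by (rule dvdE)
  with assms have "is_unit r" "r \<noteq> 0" "Q \<noteq> 0"
    using irreducibleD by fastforce+
  then show ?thesis
    using r by (simp add: degree_mult_eq is_unit_iff_degree)
qed

lemma chi_square:
  fixes P h :: "'a::field_gcd poly"
  assumes P: "irreducible P" and h: "monic h" and deg: "2 * degree h < degree P"
  shows "chi P (h\<^sup>2) = 1"
proof -
  have "poly_legendre P Q ^ multiplicity Q (h\<^sup>2) = 1" if Q: "Q \<in> prime_factors (h\<^sup>2)" for Q
  proof -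
    have "prime Q" "Q dvd h\<^sup>2"
      using Q by (auto simp: in_prime_factors_iff)
    then have "degree Q < degree P"
      using deg dvd_imp_degree_le[of Q "h\<^sup>2"] h by (simp add: degree_power_monic monic_nonzero)
    moreover have "Q dvd P \<Longrightarrow> degree Q = degree P"
      using P \<open>prime Q\<close> by (simp add: degree_eq_if_dvd_irreducible)
    ultimately have "poly_legendre P Q ^ 2 = 1"
      by (auto simp: poly_legendre_def)
    moreover have "multiplicity Q (h\<^sup>2) = 2 * multiplicity Q h"
      using \<open>prime Q\<close> h by (simp add: prime_elem_multiplicity_power_distrib monic_nonzero)
    ultimately show ?thesis
      by (simp add: power_mult)
  qed
  then show ?thesis
    by (simp add: chi_def poly_jacobi_def)
qed

definition irreducibles :: "nat \<Rightarrow> 'a::field_gcd poly set" where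
  "irreducibles n = {P. monic P \<and> irreducible P \<and> degree P = n}"

lemma finite_irreducibles [simp]: "finite (irreducibles n :: 'a::{finite,field_gcd} poly set)"
  by (rule finite_subset[OF _ finite_monics[of n]]) (auto simp: irreducibles_def monics_def)

lemma sum_chi_divisor_count_monic_squares:
  assumes "g \<ge> 1"
  shows "(\<Sum>P\<in>{P :: 'a::{finite,field_gcd} poly. monic P \<and> irreducible P \<and> degree P = 2 * g + 1}.
        \<Sum>f\<in>{f. monic f \<and> degree f \<le> 2 * g - 1 \<and> is_monic_square f}.
          real_of_int (chi P f) * real (divisor_count f) / sqrt (pnorm f))
    = real (card (irreducibles (2 * g + 1) :: 'a poly set))
        * (real g * (real g + 1) * (real g + 2) / 6 - real g * (real g - 1) * (real g - 2) / (6 * real CARD('a)))"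
proof -
  let ?S = "{f :: 'a poly. monic f \<and> degree f \<le> 2 * g - 1 \<and> is_monic_square f}"
  have "chi P f = 1" if "P \<in> irreducibles (2 * g + 1)" and "f \<in> ?S" for P f :: "'a poly"
    using that assms
    by (auto simp: irreducibles_def is_monic_square_def degree_power_monic intro!: chi_square)
  then have "(\<Sum>P\<in>irreducibles (2 * g + 1). \<Sum>f\<in>?S.
          real_of_int (chi P f) * real (divisor_count f) / sqrt (pnorm f))
      = (\<Sum>P\<in>(irreducibles (2 * g + 1) :: 'a poly set). \<Sum>f\<in>?S. real (divisor_count f) / sqrt (pnorm f))"
    by simp
  then show ?thesis
    unfolding irreducibles_def[symmetric] sum_divisor_count_monic_squares[OF assms] by simp
qed

section \<open>Counting irreducible polynomials\<close>

lemma degree_eq_sum_multiplicity: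
  fixes f :: "'a::field_gcd poly"
  assumes "monic f"
  shows "degree f = (\<Sum>P\<in>prime_factors f. multiplicity P f * degree P)"
proof -
  have "degree f = degree (\<Prod>P\<in>prime_factors f. P ^ multiplicity P f)"
    using assms by (simp add: prod_prime_factors monic_nonzero normalize_monic)
  also have "\<dots> = (\<Sum>P\<in>prime_factors f. degree (P ^ multiplicity P f))"
    by (rule degree_prod_sum_eq) (auto simp: in_prime_factors_iff)
  also have "\<dots> = (\<Sum>P\<in>prime_factors f. multiplicity P f * degree P)"
    by (intro sum.cong refl) (auto simp: degree_power_monic in_prime_factors_iff prime_iff_monic_irreducible)
  finally show ?thesis .
qed

definition prime_power_pairs :: "nat \<Rightarrow> ('a::field_gcd poly \<times> nat) set" where
  "prime_power_pairs n = {(P, k). monic P \<and> irreducible P \<and> 1 \<le> k \<and> k * degree P \<le> n}"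

lemma finite_prime_power_pairs [simp]: "finite (prime_power_pairs n :: ('a::{finite,field_gcd} poly \<times> nat) set)"
proof (rule finite_subset)
  show "prime_power_pairs n \<subseteq> {P :: 'a poly. monic P \<and> degree P \<le> n} \<times> {..n}"
  proof clarify
    fix P :: "'a poly" and k
    assume "(P, k) \<in> prime_power_pairs n"
    then have "monic P" "1 \<le> k" "1 \<le> degree P" "k * degree P \<le> n"
      by (auto simp: prime_power_pairs_def dest: irreducible_degree_pos)
    then show "P \<in> {P. monic P \<and> degree P \<le> n} \<and> k \<in> {..n}"
      by (simp add: order.trans[OF _ \<open>k * degree P \<le> n\<close>])
  qed
qed (simp add: finite_monics_degree_le)

lemma prime_power_divisors_eq_Sigma:
  fixes f :: "'a::field_gcd poly"
  assumes "monic f" "degree f \<le> n"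
  shows "{x \<in> prime_power_pairs n. fst x ^ snd x dvd f} = (SIGMA P:prime_factors f. {1..multiplicity P f})"
proof (intro set_eqI iffI)
  fix x :: "'a poly \<times> nat"
  assume x: "x \<in> {x \<in> prime_power_pairs n. fst x ^ snd x dvd f}"
  obtain P k where x_eq: "x = (P, k)"
    by (cases x)
  have "prime P" "1 \<le> k" "P ^ k dvd f"
    using x by (simp_all add: x_eq prime_power_pairs_def prime_iff_monic_irreducible)
  moreover from this have "P dvd f"
    by (cases k) (auto intro: dvd_mult_left)
  ultimately show "x \<in> (SIGMA P:prime_factors f. {1..multiplicity P f})"
    using monic_nonzero[OF assms(1)] by (auto simp: x_eq in_prime_factors_iff intro!: multiplicity_geI)
next
  fix x :: "'a poly \<times> nat"
  assume x: "x \<in> (SIGMA P:prime_factors f. {1..multiplicity P f})"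
  obtain P k where x_eq: "x = (P, k)"
    by (cases x)
  have "prime P" "1 \<le> k" "k \<le> multiplicity P f"
    using x by (auto simp: x_eq in_prime_factors_iff)
  moreover from this have "P ^ k dvd f"
    by (simp add: multiplicity_dvd')
  moreover from calculation have "k * degree P \<le> n"
    using assms dvd_imp_degree_le[of "P ^ k" f]
    by (simp add: degree_power_monic monic_nonzero prime_iff_monic_irreducible)
  ultimately show "x \<in> {x \<in> prime_power_pairs n. fst x ^ snd x dvd f}"
    by (simp add: x_eq prime_power_pairs_def prime_iff_monic_irreducible)
qed

lemma degree_eq_sum_prime_power_divisors:
  fixes f :: "'a::{finite,field_gcd} poly"
  assumes "monic f" "degree f \<le> n"
  shows "(\<Sum>x\<in>prime_power_pairs n. if fst x ^ snd x dvd f then degree (fst x) else 0) = degree f"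
proof -
  have "(\<Sum>x\<in>prime_power_pairs n. if fst x ^ snd x dvd f then degree (fst x) else 0)
      = (\<Sum>x\<in>(SIGMA P:prime_factors f. {1..multiplicity P f}). degree (fst x))"
    unfolding prime_power_divisors_eq_Sigma[OF assms, symmetric] by (simp add: sum.inter_filter)
  also have "\<dots> = (\<Sum>P\<in>prime_factors f. multiplicity P f * degree P)"
    using sum.Sigma[of "prime_factors f" "\<lambda>P. {1..multiplicity P f}" "\<lambda>P k. degree P"]
    by (simp add: case_prod_unfold)
  finally show ?thesis
    using degree_eq_sum_multiplicity[OF assms(1)] by simp
qed

lemma card_monics_dvd:
  fixes P :: "'a::{finite,field_gcd} poly"
  assumes "monic P" "degree P \<le> n"
  shows "card {f \<in> monics n. P dvd f} = CARD('a) ^ (n - degree P)"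
proof -
  have "bij_betw (\<lambda>g. P * g) (monics (n - degree P)) {f \<in> monics n. P dvd f}"
  proof (rule bij_betw_imageI)
    show "inj_on (\<lambda>g. P * g) (monics (n - degree P))"
      using assms by (auto intro!: inj_onI simp: monic_nonzero)
    show "(\<lambda>g. P * g) ` monics (n - degree P) = {f \<in> monics n. P dvd f}"
    proof (intro set_eqI iffI)
      fix f
      assume "f \<in> (\<lambda>g. P * g) ` monics (n - degree P)"
      then show "f \<in> {f \<in> monics n. P dvd f}"
        using assms by (auto simp: monics_def monic_mult degree_mult_monic)
    next
      fix f
      assume "f \<in> {f \<in> monics n. P dvd f}"
      then obtain g where g: "f = P * g" "monic f" "degree f = n"
        by (auto simp: monics_def elim!: dvdE)
      then have "monic g"
        using assms(1) monic_cancel_left by blast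
      with g assms have "g \<in> monics (n - degree P)"
        by (simp add: monics_def degree_mult_monic)
      with g(1) show "f \<in> (\<lambda>g. P * g) ` monics (n - degree P)"
        by blast
    qed
  qed
  then show ?thesis
    by (simp add: bij_betw_same_card[symmetric] card_monics)
qed

text \<open>\<open>mangoldt_sum TYPE('a) m\<close> is \<open>\<Sum>\<^bsub>deg f = m\<^esub> \<Lambda>(f)\<close>, where the von Mangoldt function
  is \<open>\<Lambda>(P ^ k) = deg P\<close> on prime powers and vanishes elsewhere.\<close>

definition mangoldt_sum :: "'a::field_gcd itself \<Rightarrow> nat \<Rightarrow> nat" where
  "mangoldt_sum _ m =
     (\<Sum>x\<in>{x \<in> (prime_power_pairs m :: ('a poly \<times> nat) set). snd x * degree (fst x) = m}. degree (fst x))"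

text \<open>Double counting: sum \<open>\<Sum>\<^bsub>d | f\<^esub> \<Lambda>(d) = deg f\<close> over all monic \<open>f\<close> of degree \<open>n\<close>.\<close>

lemma degree_sum_monics_eq_mangoldt:
  "n * CARD('a::{finite,field_gcd}) ^ n = (\<Sum>m\<in>{1..n}. CARD('a) ^ (n - m) * mangoldt_sum TYPE('a) m)"
proof -
  let ?q = "CARD('a)" and ?A = "prime_power_pairs n :: ('a poly \<times> nat) set"
  have "n * ?q ^ n = (\<Sum>f\<in>(monics n :: 'a poly set). degree f)"
    by (simp add: card_monics[unfolded monics_def] monics_def)
  also have "\<dots> = (\<Sum>f\<in>monics n. \<Sum>x\<in>?A. if fst x ^ snd x dvd f then degree (fst x) else 0)"
    by (intro sum.cong refl degree_eq_sum_prime_power_divisors[symmetric]) (auto simp: monics_def)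
  also have "\<dots> = (\<Sum>x\<in>?A. \<Sum>f\<in>monics n. if fst x ^ snd x dvd f then degree (fst x) else 0)"
    by (rule sum.swap)
  also have "\<dots> = (\<Sum>x\<in>?A. degree (fst x) * ?q ^ (n - snd x * degree (fst x)))"
  proof (intro sum.cong refl)
    fix x
    assume "x \<in> ?A"
    then have "monic (fst x)" "degree (fst x ^ snd x) \<le> n"
      by (auto simp: prime_power_pairs_def degree_power_monic)
    then show "(\<Sum>f\<in>monics n. if fst x ^ snd x dvd f then degree (fst x) else 0)
        = degree (fst x) * ?q ^ (n - snd x * degree (fst x))"
      by (simp add: sum.inter_filter[symmetric] card_monics_dvd monic_power degree_power_monic)
  qed
  also have "\<dots> = (\<Sum>m\<in>{1..n}. \<Sum>x\<in>{x \<in> ?A. snd x * degree (fst x) = m}.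
                     degree (fst x) * ?q ^ (n - snd x * degree (fst x)))"
  proof (rule sum.group[symmetric])
    show "(\<lambda>x. snd x * degree (fst x)) ` ?A \<subseteq> {1..n}"
      by (auto simp: prime_power_pairs_def dest!: irreducible_degree_pos)
  qed simp_all
  also have "\<dots> = (\<Sum>m\<in>{1..n}. ?q ^ (n - m) * mangoldt_sum TYPE('a) m)"
  proof (intro sum.cong refl)
    fix m
    assume "m \<in> {1..n}"
    then have "{x \<in> ?A. snd x * degree (fst x) = m}
        = {x \<in> (prime_power_pairs m :: ('a poly \<times> nat) set). snd x * degree (fst x) = m}"
      by (auto simp: prime_power_pairs_def)
    then show "(\<Sum>x\<in>{x \<in> ?A. snd x * degree (fst x) = m}. degree (fst x) * ?q ^ (n - snd x * degree (fst x)))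
        = ?q ^ (n - m) * mangoldt_sum TYPE('a) m"
      by (simp add: mangoldt_sum_def sum_distrib_left mult.commute)
  qed
  finally show ?thesis .
qed

text \<open>Subtract \<open>q\<close> times the preceding identity for \<open>n - 1\<close>.\<close>

lemma mangoldt_sum_eq:
  assumes "n \<ge> 1"
  shows "mangoldt_sum TYPE('a::{finite,field_gcd}) n = CARD('a) ^ n"
proof -
  let ?q = "CARD('a)" and ?L = "mangoldt_sum TYPE('a)"
  obtain k where n: "n = Suc k"
    using assms by (cases n) auto
  have "(\<Sum>m\<in>{1..Suc k}. ?q ^ (Suc k - m) * ?L m) = ?L (Suc k) + (\<Sum>m\<in>{1..k}. ?q ^ (Suc k - m) * ?L m)"
    by (simp add: sum.atLeast1_atMost_eq sum.atMost_Suc)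
  also have "(\<Sum>m\<in>{1..k}. ?q ^ (Suc k - m) * ?L m) = ?q * (\<Sum>m\<in>{1..k}. ?q ^ (k - m) * ?L m)"
    by (simp add: sum_distrib_left Suc_diff_le mult.assoc)
  finally have "Suc k * ?q ^ Suc k = ?L (Suc k) + ?q * (k * ?q ^ k)"
    unfolding degree_sum_monics_eq_mangoldt .
  then show ?thesis
    using n by (simp add: algebra_simps)
qed

lemma mangoldt_sum_split:
  "mangoldt_sum TYPE('a::{finite,field_gcd}) n
     = n * card (irreducibles n :: 'a poly set)
       + (\<Sum>x\<in>{x \<in> (prime_power_pairs n :: ('a poly \<times> nat) set). snd x * degree (fst x) = n \<and> snd x \<noteq> 1}.
            degree (fst x))"
proof -
  let ?I = "(\<lambda>P. (P, 1 :: nat)) ` (irreducibles n :: 'a poly set)"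
  let ?R = "{x \<in> (prime_power_pairs n :: ('a poly \<times> nat) set). snd x * degree (fst x) = n \<and> snd x \<noteq> 1}"
  have "{x \<in> prime_power_pairs n. snd x * degree (fst x) = n} = ?I \<union> ?R"
    by (auto simp: prime_power_pairs_def irreducibles_def image_iff)
  moreover have "(\<Sum>x\<in>?I \<union> ?R. degree (fst x)) = (\<Sum>x\<in>?I. degree (fst x)) + (\<Sum>x\<in>?R. degree (fst x))"
    by (rule sum.union_disjoint) auto
  moreover have "(\<Sum>x\<in>?I. degree (fst x)) = n * card (irreducibles n :: 'a poly set)"
    by (simp add: sum.reindex inj_on_def irreducibles_def)
  ultimately show ?thesis
    unfolding mangoldt_sum_def by simp
qed

lemma sum_higher_prime_powers_le:
  "(\<Sum>x\<in>{x \<in> (prime_power_pairs n :: ('a::{finite,field_gcd} poly \<times> nat) set). snd x * degree (fst x) = n \<and> snd x \<noteq> 1}.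
      degree (fst x))
    \<le> n * ((n div 2 + 1) * (n + 1) * CARD('a) ^ (n div 2))"
proof -
  let ?B = "{x \<in> (prime_power_pairs n :: ('a poly \<times> nat) set). snd x * degree (fst x) = n \<and> snd x \<noteq> 1}"
  let ?U = "(\<Union>d\<le>n div 2. monics d :: 'a poly set) \<times> {..n}"
  have "?B \<subseteq> ?U"
  proof
    fix x
    assume "x \<in> ?B"
    then obtain P k where x: "x = (P, k)" "(P, k) \<in> ?B"
      by (cases x) auto
    then have "k * degree P = n" "2 \<le> k" "monic P" "1 \<le> degree P"
      by (auto simp: prime_power_pairs_def dest: irreducible_degree_pos)
    moreover from this have "2 * degree P \<le> n" "k \<le> n"
      by (metis mult_le_mono1, metis mult_le_mono2 nat_mult_1_right)
    ultimately show "x \<in> ?U"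
      by (auto simp: x monics_def)
  qed
  then have "card ?B \<le> card ?U"
    by (intro card_mono) auto
  also have "\<dots> = card (\<Union>d\<le>n div 2. monics d :: 'a poly set) * (n + 1)"
    by (simp add: card_cartesian_product)
  also have "\<dots> \<le> (\<Sum>d\<le>n div 2. card (monics d :: 'a poly set)) * (n + 1)"
    by (intro mult_le_mono1 card_UN_le) simp
  also have "\<dots> \<le> (n div 2 + 1) * CARD('a) ^ (n div 2) * (n + 1)"
  proof (intro mult_le_mono1)
    have "1 \<le> CARD('a)"
      by (simp add: Suc_leI)
    then have "(\<Sum>d\<le>n div 2. card (monics d :: 'a poly set)) \<le> (\<Sum>d\<le>n div 2. CARD('a) ^ (n div 2))"
      by (intro sum_mono) (simp add: card_monics power_increasing)
    then show "(\<Sum>d\<le>n div 2. card (monics d :: 'a poly set)) \<le> (n div 2 + 1) * CARD('a) ^ (n div 2)"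
      by simp
  qed
  finally have card_B: "card ?B \<le> (n div 2 + 1) * CARD('a) ^ (n div 2) * (n + 1)" .
  have "degree (fst x) \<le> n" if "x \<in> ?B" for x
  proof -
    from that have "1 \<le> snd x" "snd x * degree (fst x) = n"
      by (auto simp: prime_power_pairs_def)
    then show ?thesis
      using mult_le_mono1[of 1 "snd x" "degree (fst x)"] by simp
  qed
  then have "(\<Sum>x\<in>?B. degree (fst x)) \<le> card ?B * n"
    using sum_bounded_above[of ?B "\<lambda>x. degree (fst x)" n] by simp
  also have "\<dots> \<le> (n div 2 + 1) * CARD('a) ^ (n div 2) * (n + 1) * n"
    using card_B by (rule mult_le_mono1)
  finally show ?thesis
    by (simp add: algebra_simps)
qed

lemma card_irreducibles_bounds:
  assumes "n \<ge> 1"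
  shows "n * card (irreducibles n :: 'a::{finite,field_gcd} poly set) \<le> CARD('a) ^ n"
    and "CARD('a) ^ n \<le> n * card (irreducibles n :: 'a poly set) + n * ((n div 2 + 1) * (n + 1) * CARD('a) ^ (n div 2))"
  using mangoldt_sum_split[of n, where 'a = 'a] sum_higher_prime_powers_le[of n, where 'a = 'a]
    mangoldt_sum_eq[OF assms, where 'a = 'a]
  by linarith+

section \<open>Asymptotics\<close>

lemma cubic_term_bounds:
  fixes q :: real and g :: nat
  assumes "q \<ge> 1" "g \<ge> 1"
  defines "T \<equiv> real g * (real g + 1) * (real g + 2) / 6 - real g * (real g - 1) * (real g - 2) / (6 * q)"
  shows "0 \<le> T" "T \<le> real g ^ 3"
proof -
  define x where "x = real g"
  define a where "a = x * (x - 1) * (x - 2) / 6"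
  have x: "x \<ge> 1"
    using assms(2) by (simp add: x_def)
  have "0 \<le> (x - 1) * (x - 2)"
    using assms(2) by (cases "g = 1") (simp_all add: x_def)
  then have "0 \<le> a"
    using x by (simp add: a_def mult.assoc)
  moreover have "a / q \<le> a / 1"
    using calculation assms(1) by (intro divide_left_mono) simp_all
  ultimately have a: "0 \<le> a / q" "a / q \<le> a"
    using assms(1) by simp_all
  have T: "T = x * (x + 1) * (x + 2) / 6 - a / q"
    by (simp add: T_def a_def x_def)
  have "6 * a = x * (x - 1) * (x - 2)"
    by (simp add: a_def)
  then have "x * (x + 1) * (x + 2) / 6 - a = x\<^sup>2"
    by (simp add: power2_eq_square algebra_simps)
  then show "0 \<le> T"
    using a T zero_le_power2[of x] by linarith
  have "x * (x + 1) * (x + 2) = 6 * x ^ 3 - x * (x - 1) * (5 * x + 2)"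
    by (simp add: power3_eq_cube algebra_simps)
  moreover have "0 \<le> x * (x - 1) * (5 * x + 2)"
    using x by simp
  ultimately have "T \<le> x ^ 3"
    using a T by linarith
  then show "T \<le> real g ^ 3"
    by (simp add: x_def)
qed

lemma cubic_term_minus_main_term:
  fixes q :: real and g :: nat
  assumes "q \<ge> 1" "g \<ge> 1"
  shows "\<bar>(real g * (real g + 1) * (real g + 2) / 6 - real g * (real g - 1) * (real g - 2) / (6 * q))
      - (1 - 1 / q) * (real g - 1) * real g * (2 * real g - 1) / 12\<bar> \<le> 2 * (real g)\<^sup>2"
    (is "\<bar>?d\<bar> \<le> _")
proof -
  define x where "x = real g"
  define r where "r = x * (x - 1) / q"
  define d where "d = ?d"
  have x: "x \<ge> 1"
    using assms(2) by (simp add: x_def)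
  have "12 * d = 9 * x\<^sup>2 + 3 * x + 3 * r"
    using assms(1) by (simp add: d_def x_def r_def power2_eq_square field_simps)
  moreover have "0 \<le> r"
    using x assms(1) by (simp add: r_def)
  moreover have "r \<le> x * (x - 1)"
    unfolding r_def using x assms(1) divide_left_mono[of 1 q "x * (x - 1)"] by simp
  then have "r \<le> x\<^sup>2"
    using x by (simp add: power2_eq_square algebra_simps)
  moreover have "x \<le> x\<^sup>2"
    using x by (simp add: power2_eq_square)
  ultimately have "\<bar>d\<bar> \<le> 2 * x\<^sup>2"
    using x by linarith
  then show ?thesis
    by (simp add: d_def x_def)
qed

lemma abs_mult_diff_mult_le:
  fixes N A T M E B D :: real
  assumes "\<bar>N - A\<bar> \<le> E" "0 \<le> T" "T \<le> B" "\<bar>T - M\<bar> \<le> D" "0 \<le> A"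
  shows "\<bar>N * T - A * M\<bar> \<le> E * B + A * D"
proof -
  have "\<bar>N * T - A * M\<bar> = \<bar>(N - A) * T + A * (T - M)\<bar>"
    by (simp add: algebra_simps)
  also have "\<dots> \<le> \<bar>N - A\<bar> * T + A * \<bar>T - M\<bar>"
    using assms(2,5) abs_triangle_ineq[of "(N - A) * T" "A * (T - M)"] by (simp add: abs_mult)
  also have "\<dots> \<le> E * B + A * D"
    using assms by (intro add_mono mult_mono mult_left_mono) auto
  finally show ?thesis .
qed

lemma eventually_error_term_le:
  fixes q :: real
  assumes "q \<ge> 2"
  shows "eventually (\<lambda>g. (real g + 1) * (2 * real g + 2) * q ^ g * real g ^ 3
    \<le> q ^ (2 * g + 1) / real (2 * g + 1) * (real g)\<^sup>2) at_top"
proof -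
  have "eventually (\<lambda>g::nat. (real g + 1) * (2 * real g + 2) * (2 * real g + 1) * real g \<le> 2 ^ (g + 1)) at_top"
    by real_asymp
  then show ?thesis
  proof eventually_elim
    case (elim g)
    have "(real g + 1) * (2 * real g + 2) * (2 * real g + 1) * real g \<le> q ^ (g + 1)"
      using elim power_mono[of 2 q "g + 1"] assms by linarith
    then have "(real g + 1) * (2 * real g + 2) * (2 * real g + 1) * real g * q ^ g \<le> q ^ (g + 1) * q ^ g"
      using assms by (intro mult_right_mono) simp_all
    also have "\<dots> = q ^ (2 * g + 1)"
      by (simp add: mult_2 flip: power_add)
    finally have "(real g + 1) * (2 * real g + 2) * (2 * real g + 1) * real g * q ^ g * ((real g)\<^sup>2 / real (2 * g + 1))
        \<le> q ^ (2 * g + 1) * ((real g)\<^sup>2 / real (2 * g + 1))"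
      by (rule mult_right_mono) simp
    moreover have "(real g + 1) * (2 * real g + 2) * q ^ g * real g ^ 3
        = (real g + 1) * (2 * real g + 2) * (2 * real g + 1) * real g * q ^ g * ((real g)\<^sup>2 / real (2 * g + 1))"
      by (simp add: field_simps power2_eq_square power3_eq_cube add_nonneg_eq_0_iff)
    ultimately show ?case
      by (simp add: mult.commute)
  qed
qed

lemma card_irreducibles_approx:
  assumes "n \<ge> 1"
  shows "\<bar>real (card (irreducibles n :: 'a::{finite,field_gcd} poly set)) - real CARD('a) ^ n / real n\<bar>
    \<le> real ((n div 2 + 1) * (n + 1)) * real CARD('a) ^ (n div 2)"
proof -
  let ?N = "real (card (irreducibles n :: 'a poly set))" and ?q = "real CARD('a)"
    and ?E = "real ((n div 2 + 1) * (n + 1)) * real CARD('a) ^ (n div 2)"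
  have "real n * ?N \<le> ?q ^ n" "?q ^ n \<le> real n * ?N + real n * ?E"
    using card_irreducibles_bounds[OF assms, where 'a = 'a]
    by (simp_all only: of_nat_le_iff flip: of_nat_mult of_nat_power of_nat_add)
  moreover have "real n > 0"
    using assms by simp
  ultimately show ?thesis
    by (simp add: abs_le_iff field_simps)
qed

lemma main_term_eq:
  fixes q :: real
  shows "(let q = q; absP = q ^ (2*g+1); logP = real (2*g+1);
             zeta2 = 1 / (1 - 1/q);
             h = real_of_int \<lfloor>(2 * real g - 1) / 2\<rfloor>
          in 1/12 * (1/zeta2) * (absP / logP) * h * (1 + h) * (1 + 2*h))
    = q ^ (2 * g + 1) / real (2 * g + 1) * ((1 - 1 / q) * (real g - 1) * real g * (2 * real g - 1) / 12)"
proof -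
  have "\<lfloor>(2 * real g - 1) / 2\<rfloor> = int g - 1"
    by (rule floor_unique) (simp_all add: field_simps)
  then show ?thesis
    unfolding Let_def by simp
qed

lemma error_estimate:
  fixes q N :: real and g :: nat
  assumes "q \<ge> 1" "g \<ge> 1"
    and "\<bar>N - q ^ (2 * g + 1) / real (2 * g + 1)\<bar> \<le> (real g + 1) * (2 * real g + 2) * q ^ g"
    and "(real g + 1) * (2 * real g + 2) * q ^ g * real g ^ 3 \<le> q ^ (2 * g + 1) / real (2 * g + 1) * (real g)\<^sup>2"
  shows "\<bar>N * (real g * (real g + 1) * (real g + 2) / 6 - real g * (real g - 1) * (real g - 2) / (6 * q))
      - q ^ (2 * g + 1) / real (2 * g + 1) * ((1 - 1 / q) * (real g - 1) * real g * (2 * real g - 1) / 12)\<bar>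
    \<le> 3 * (q ^ (2 * g + 1) / real (2 * g + 1) * (real g)\<^sup>2)"
proof -
  let ?A = "q ^ (2 * g + 1) / real (2 * g + 1)"
  have "\<bar>N * (real g * (real g + 1) * (real g + 2) / 6 - real g * (real g - 1) * (real g - 2) / (6 * q))
      - ?A * ((1 - 1 / q) * (real g - 1) * real g * (2 * real g - 1) / 12)\<bar>
    \<le> (real g + 1) * (2 * real g + 2) * q ^ g * real g ^ 3 + ?A * (2 * (real g)\<^sup>2)"
    using assms(1) by (intro abs_mult_diff_mult_le assms(3) cubic_term_bounds[OF assms(1,2)]
        cubic_term_minus_main_term[OF assms(1,2)]) simp
  also have "\<dots> \<le> 3 * (?A * (real g)\<^sup>2)"
    using assms(4) mult.left_commute[of ?A 2 "(real g)\<^sup>2"] by linarith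
  finally show ?thesis .
qed

theorem proposition4p6:
  assumes "CARD('a::{finite,field_gcd}) mod 4 = 1"
  shows "(\<lambda>g::nat.
      (\<Sum>P\<in>{P::'a poly. monic P \<and> irreducible P \<and> degree P = 2*g+1}.
        \<Sum>f\<in>{f::'a poly. monic f \<and> degree f \<le> 2*g-1 \<and> is_monic_square f}.
          real_of_int (chi P f) * real (divisor_count f) / sqrt (pnorm f))
      - (let q = real CARD('a); absP = q ^ (2*g+1); logP = real (2*g+1);
             zeta2 = 1 / (1 - 1/q);
             h = real_of_int \<lfloor>(2 * real g - 1) / 2\<rfloor>
         in 1/12 * (1/zeta2) * (absP / logP) * h * (1 + h) * (1 + 2*h)))
    \<in> O(\<lambda>g::nat. real CARD('a) ^ (2*g+1) / real (2*g+1) * (real g)\<^sup>2)"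
    (is "?E \<in> O(?B)")
proof -
  let ?q = "real CARD('a)"
  have "card {0 :: 'a, 1} \<le> CARD('a)"
    by (rule card_mono) simp_all
  then have q: "?q \<ge> 2"
    by simp
  have "eventually (\<lambda>g. norm (?E g) \<le> 3 * norm (?B g)) at_top"
    using eventually_error_term_le[OF q] eventually_ge_at_top[of 1]
  proof eventually_elim
    case (elim g)
    have "\<bar>real (card (irreducibles (2 * g + 1) :: 'a poly set)) - ?q ^ (2 * g + 1) / real (2 * g + 1)\<bar>
        \<le> (real g + 1) * (2 * real g + 2) * ?q ^ g"
      using card_irreducibles_approx[of "2 * g + 1", where 'a = 'a] by (simp add: algebra_simps)
    from error_estimate[of ?q g, OF _ elim(2) this elim(1)] show ?case
      using q sum_chi_divisor_count_monic_squares[OF elim(2), where 'a = 'a]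
      unfolding main_term_eq by (simp add: irreducibles_def)
  qed
  then show ?thesis
    by (rule bigoI)
qed

end
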